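(* Let $H\in(1/2,1)$, $\alpha\in(1-H,1)$, $T>0$, $N\ge2$, $h=T/N$, $t_n=nh$. For $s\in(t_{j-1},t_j]$ let $\hat s=t_{j-1}$ and $$A(\cdot;s)=\big((\hat s-\cdot)^{\alpha-1}-(s-\cdot)^{\alpha-1}\big)\mathbf 1_{(0,\hat s)}(\cdot)+(s-\cdot)^{\alpha-1}\mathbf 1_{(\hat s,s)}(\cdot).$$ Then there is a constant $C$ (independent of $N$) such that for all $1\le i<j\le N$, $s\in(t_{i-1},t_i]$ and $\tau\in(t_{j-1},t_j]$, $$\int_{[0,T]^2}A(u;s)A(v;\tau)|u-v|^{2H-2}\,\mathrm du\,\mathrm dv\le Ch^{2\alpha}(\tau-s)^{2H-2}.$$ *)

theory Defs
  imports "HOL-Analysis.Analysis"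
begin

definition Akern :: "real \<Rightarrow> real \<Rightarrow> real \<Rightarrow> real \<Rightarrow> real" where
  "Akern \<alpha> shat s u =
     ((shat - u) powr (\<alpha> - 1) - (s - u) powr (\<alpha> - 1)) * indicator {0<..<shat} u
     + (s - u) powr (\<alpha> - 1) * indicator {shat<..<s} u"

end

(*
  On a grid cell of width h the kernel A(.; s) is dominated by m(shat - .) + m(s - .), where
  m(x) = min(x^(alpha-1), h x^(alpha-2)) for x > 0: next to its singularity A is a single power,
  further away a difference of two powers, which the mean value theorem bounds by h x^(alpha-2).
  The majorant m has mass O(h^alpha).  With b = 2 - 2H, the energy
  int int m(p - u) m(q - v) |u - v|^(-b) du dv is split at the scale R = max(h, |q - p|/4): the
  tails x >= R contribute O(h^(2 alpha) R^(-b)); if |q - p| >= 4h the remaining parts are R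
  apart, and otherwise they live on two intervals of length h, where the weighted AM-GM
  inequality x^(-a) y^(-a) w^(-b) <= x^(-P) y^(-P) + x^(-P) w^(-r) + y^(-P) w^(-r) (suitably
  scaled by powers of h), with P, r < 1, reduces the joint singularity to integrable
  one-dimensional ones.  Such P and r exist exactly because a + b/2 < 1 for a = 1 - alpha,
  i.e. because alpha > 1 - H.  As tau - s <= |q - p| + h for the four pairs p in {shat, s},
  q in {tauhat, tau}, the bound h^(2 alpha) (tau - s)^(2H-2) follows.
*)
theory Submission
  imports Defs
begin

section \<open>One-dimensional power integrals\<close>

lemma nn_integral_lborel_reflect:
  fixes f :: "real \<Rightarrow> ennreal"
  assumes [measurable]: "f \<in> borel_measurable borel"
  shows "(\<integral>\<^sup>+x. f (p - x) \<partial>lborel) = (\<integral>\<^sup>+x. f x \<partial>lborel)"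
  using nn_integral_real_affine[of f "-1" p] by simp

lemma nn_integral_lborel_translate:
  fixes f :: "real \<Rightarrow> ennreal"
  assumes [measurable]: "f \<in> borel_measurable borel"
  shows "(\<integral>\<^sup>+x. f (x - p) \<partial>lborel) = (\<integral>\<^sup>+x. f x \<partial>lborel)"
  using nn_integral_real_affine[of "\<lambda>x. f (x - p)" 1 p] by simp

lemma nn_integral_le_lincomb:
  fixes f g k :: "'a \<Rightarrow> real"
  assumes [measurable]: "f \<in> borel_measurable M" "g \<in> borel_measurable M"
    and "0 \<le> a" "0 \<le> b" "\<And>x. 0 \<le> f x" "\<And>x. 0 \<le> g x"
    and "\<And>x. k x \<le> a * f x + b * g x"
  shows "(\<integral>\<^sup>+x. ennreal (k x) \<partial>M)
           \<le> ennreal a * (\<integral>\<^sup>+x. ennreal (f x) \<partial>M) + ennreal b * (\<integral>\<^sup>+x. ennreal (g x) \<partial>M)"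
proof -
  have "(\<integral>\<^sup>+x. ennreal (k x) \<partial>M) \<le> (\<integral>\<^sup>+x. ennreal a * ennreal (f x) + ennreal b * ennreal (g x) \<partial>M)"
    using assms by (intro nn_integral_mono) (simp add: ennreal_leI flip: ennreal_mult ennreal_plus)
  also have "\<dots> = ennreal a * (\<integral>\<^sup>+x. ennreal (f x) \<partial>M) + ennreal b * (\<integral>\<^sup>+x. ennreal (g x) \<partial>M)"
    by (simp add: nn_integral_add nn_integral_cmult)
  finally show ?thesis .
qed

lemma nn_integral_powr_Icc_0:
  fixes e L :: real
  assumes "-1 < e" "0 \<le> L"
  shows "(\<integral>\<^sup>+x. ennreal (indicator {0..L} x * x powr e) \<partial>lborel) = ennreal (L powr (e + 1) / (e + 1))"
proof -
  have "((\<lambda>x. x powr e) has_integral (L powr (e + 1) / (e + 1))) {0..L}"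
    using assms by (intro has_integral_powr_from_0) auto
  moreover have "(\<lambda>x. indicator {0..L} x * x powr e) = (\<lambda>x. if x \<in> {0..L} then x powr e else 0)"
    by (auto simp: indicator_def)
  ultimately have "((\<lambda>x. indicator {0..L} x * x powr e) has_integral (L powr (e + 1) / (e + 1))) UNIV"
    by (simp only: has_integral_restrict_UNIV)
  then show ?thesis
    by (intro nn_integral_has_integral_lborel) auto
qed

lemma nn_integral_powr_Icc_reflect:
  fixes e L p :: real
  assumes "-1 < e" "0 \<le> L"
  shows "(\<integral>\<^sup>+u. ennreal (indicator {p-L..p} u * (p - u) powr e) \<partial>lborel) = ennreal (L powr (e + 1) / (e + 1))"
proof -
  have "(\<integral>\<^sup>+u. ennreal (indicator {p-L..p} u * (p - u) powr e) \<partial>lborel)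
      = (\<integral>\<^sup>+u. ennreal (indicator {0..L} (p - u) * (p - u) powr e) \<partial>lborel)"
    by (intro nn_integral_cong) (auto simp: indicator_def)
  also have "\<dots> = (\<integral>\<^sup>+x. ennreal (indicator {0..L} x * x powr e) \<partial>lborel)"
    by (rule nn_integral_lborel_reflect[where f = "\<lambda>x. ennreal (indicator {0..L} x * x powr e)"]) measurable
  finally show ?thesis
    using assms by (simp add: nn_integral_powr_Icc_0)
qed

lemma nn_integral_powr_Ici:
  fixes e R :: real
  assumes "e < -1" "0 < R"
  shows "(\<integral>\<^sup>+x. ennreal (indicator {R..} x * x powr e) \<partial>lborel) = ennreal (R powr (e + 1) / (- e - 1))"
proof -
  have "((\<lambda>x. x powr e) has_integral (R powr (e + 1) / (- e - 1))) {R..}"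
    using has_integral_powr_to_inf[of e R] assms by (simp add: minus_divide_right)
  moreover have "(\<lambda>x. indicator {R..} x * x powr e) = (\<lambda>x. if x \<in> {R..} then x powr e else 0)"
    by (auto simp: indicator_def)
  ultimately have "((\<lambda>x. indicator {R..} x * x powr e) has_integral (R powr (e + 1) / (- e - 1))) UNIV"
    by (simp only: has_integral_restrict_UNIV)
  then show ?thesis
    using assms by (intro nn_integral_has_integral_lborel) auto
qed

lemma nn_integral_abs_powr_centered_le:
  fixes e l z :: real
  assumes "e < 1" "0 \<le> l"
  shows "(\<integral>\<^sup>+y. ennreal (indicator {z-l..z+l} y * \<bar>y - z\<bar> powr (-e)) \<partial>lborel)
           \<le> ennreal (2 * l powr (1 - e) / (1 - e))"
proof -
  let ?g = "\<lambda>x. ennreal (indicator {0..l} x * x powr (-e))"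
  have "(\<integral>\<^sup>+y. ennreal (indicator {z-l..z+l} y * \<bar>y - z\<bar> powr (-e)) \<partial>lborel)
          \<le> (\<integral>\<^sup>+y. ?g (z - y) + ?g (y - z) \<partial>lborel)"
    by (intro nn_integral_mono) (auto simp: indicator_def)
  also have "\<dots> = (\<integral>\<^sup>+y. ?g (z - y) \<partial>lborel) + (\<integral>\<^sup>+y. ?g (y - z) \<partial>lborel)"
    by (rule nn_integral_add) auto
  also have "\<dots> = ennreal (2 * l powr (1 - e) / (1 - e))"
    using assms
    by (subst nn_integral_lborel_reflect, measurable, subst nn_integral_lborel_translate, measurable)
      (simp add: nn_integral_powr_Icc_0 flip: ennreal_plus)
  finally show ?thesis .
qed

lemma nn_integral_interval_abs_powr_le:
  fixes e l a z :: real
  assumes "0 \<le> e" "e < 1" "0 < l"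
  shows "(\<integral>\<^sup>+y. ennreal (indicator {a..a+l} y * \<bar>y - z\<bar> powr (-e)) \<partial>lborel)
           \<le> ennreal ((2 / (1 - e) + 1) * l powr (1 - e))"
proof -
  have "indicator {a..a+l} y * \<bar>y - z\<bar> powr (-e)
          \<le> 1 * (indicator {z-l..z+l} y * \<bar>y - z\<bar> powr (-e)) + l powr (-e) * indicator {a..a+l} y" for y
  proof (cases "\<bar>y - z\<bar> \<le> l")
    case False
    then have "\<bar>y - z\<bar> powr (-e) \<le> l powr (-e)"
      using assms by (intro powr_mono2') auto
    with False show ?thesis by (auto simp: indicator_def)
  qed (auto simp: indicator_def)
  then have "(\<integral>\<^sup>+y. ennreal (indicator {a..a+l} y * \<bar>y - z\<bar> powr (-e)) \<partial>lborel)
      \<le> ennreal 1 * (\<integral>\<^sup>+y. ennreal (indicator {z-l..z+l} y * \<bar>y - z\<bar> powr (-e)) \<partial>lborel)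
        + ennreal (l powr (-e)) * (\<integral>\<^sup>+y. ennreal (indicator {a..a+l} y) \<partial>lborel)"
    by (intro nn_integral_le_lincomb) auto
  also have "\<dots> \<le> ennreal (2 * l powr (1 - e) / (1 - e)) + ennreal (l powr (-e)) * ennreal l"
    using assms nn_integral_abs_powr_centered_le[of e l z] by (intro add_mono) (auto simp: ennreal_indicator)
  also have "\<dots> = ennreal (2 * l powr (1 - e) / (1 - e) + l powr (-e) * l)"
    using assms by (simp add: ennreal_mult)
  also have "l powr (-e) * l = l powr (1 - e)"
    using powr_add[of l "-e" 1] assms by simp
  also have "2 * l powr (1 - e) / (1 - e) + l powr (1 - e) = (2 / (1 - e) + 1) * l powr (1 - e)"
    by (simp add: distrib_right)
  finally show ?thesis .
qed

lemma nn_integral_tail_powr_abs_powr_le: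
  fixes c b R w :: real
  assumes "c < -1" "0 \<le> b" "b < 1" "0 < R"
  shows "(\<integral>\<^sup>+x. ennreal (indicator {R..} x * x powr c * \<bar>x - w\<bar> powr (-b)) \<partial>lborel)
           \<le> ennreal ((2 / (1 - b) + 1 / (- c - 1)) * R powr (c + 1 - b))"
proof -
  have "indicator {R..} x * x powr c * \<bar>x - w\<bar> powr (-b)
          \<le> R powr c * (indicator {w-R..w+R} x * \<bar>x - w\<bar> powr (-b))
            + R powr (-b) * (indicator {R..} x * x powr c)" for x
  proof (cases "R \<le> x")
    case True
    then have "x powr c \<le> R powr c"
      using assms by (intro powr_mono2') auto
    have far_bound: "\<bar>x - w\<bar> powr (-b) \<le> R powr (-b)" if "R < \<bar>x - w\<bar>"
      using that assms by (intro powr_mono2') auto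
    show ?thesis
    proof (cases "\<bar>x - w\<bar> \<le> R")
      case near: True
      have "x powr c * \<bar>x - w\<bar> powr (-b) \<le> R powr c * \<bar>x - w\<bar> powr (-b)"
        using \<open>x powr c \<le> R powr c\<close> by (intro mult_right_mono) auto
      with near True show ?thesis by (auto simp: indicator_def intro: add_increasing2)
    next
      case far: False
      have "x powr c * \<bar>x - w\<bar> powr (-b) \<le> x powr c * R powr (-b)"
        using far far_bound by (intro mult_left_mono) auto
      with far True show ?thesis by (auto simp: indicator_def mult.commute)
    qed
  qed (simp add: indicator_def)
  then have "(\<integral>\<^sup>+x. ennreal (indicator {R..} x * x powr c * \<bar>x - w\<bar> powr (-b)) \<partial>lborel)
      \<le> ennreal (R powr c) * (\<integral>\<^sup>+x. ennreal (indicator {w-R..w+R} x * \<bar>x - w\<bar> powr (-b)) \<partial>lborel)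
        + ennreal (R powr (-b)) * (\<integral>\<^sup>+x. ennreal (indicator {R..} x * x powr c) \<partial>lborel)"
    by (intro nn_integral_le_lincomb) auto
  also have "\<dots> \<le> ennreal (R powr c) * ennreal (2 * R powr (1 - b) / (1 - b))
        + ennreal (R powr (-b)) * ennreal (R powr (c + 1) / (- c - 1))"
    using assms by (intro add_mono mult_left_mono nn_integral_abs_powr_centered_le)
      (auto simp: nn_integral_powr_Ici)
  also have "\<dots> = ennreal ((2 / (1 - b) + 1 / (- c - 1)) * R powr (c + 1 - b))"
  proof -
    have "R powr c * R powr (1 - b) = R powr (c + 1 - b)" "R powr (-b) * R powr (c + 1) = R powr (c + 1 - b)"
      by (simp_all add: algebra_simps flip: powr_add)
    then show ?thesis
      using assms by (simp add: algebra_simps flip: ennreal_mult ennreal_plus)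
  qed
  finally show ?thesis .
qed

lemma powr_diff_powr_add_le:
  fixes x y \<beta> :: real
  assumes "0 < x" "0 \<le> y" "-1 \<le> \<beta>"
  shows "x powr \<beta> - (x + y) powr \<beta> \<le> y * x powr (\<beta> - 1)"
proof -
  have "1 - y / x \<le> 1 / (1 + y / x)"
    using assms by (simp add: field_simps)
  also have "\<dots> = (1 + y / x) powr (-1)"
    using assms by (simp add: powr_minus_divide)
  also have "\<dots> \<le> (1 + y / x) powr \<beta>"
    using assms by (intro powr_mono) auto
  finally have "x powr \<beta> * (1 - y / x) \<le> x powr \<beta> * (1 + y / x) powr \<beta>"
    by (simp add: mult_left_mono)
  also have "\<dots> = (x + y) powr \<beta>"
    using assms by (simp add: powr_mult[symmetric] distrib_left)
  moreover have "x powr \<beta> * (y / x) = y * x powr (\<beta> - 1)"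
    using assms by (simp add: powr_diff)
  ultimately show ?thesis
    by (simp add: right_diff_distrib)
qed

lemma powr_tail_factor_le:
  fixes h R \<alpha> b :: real
  assumes "0 < h" "h \<le> R" "\<alpha> \<le> 1"
  shows "h powr (1 + \<alpha>) * R powr (\<alpha> - 1 - b) \<le> h powr (2 * \<alpha>) * R powr (-b)"
proof -
  have "R powr (\<alpha> - 1 - b) = R powr (\<alpha> - 1) * R powr (-b)"
    by (simp flip: powr_add)
  also have "\<dots> \<le> h powr (\<alpha> - 1) * R powr (-b)"
    using assms by (intro mult_right_mono powr_mono2') auto
  finally have "h powr (1 + \<alpha>) * R powr (\<alpha> - 1 - b) \<le> (h powr (1 + \<alpha>) * h powr (\<alpha> - 1)) * R powr (-b)"
    by (simp add: mult_left_mono mult.assoc)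
  also have "h powr (1 + \<alpha>) * h powr (\<alpha> - 1) = h powr (2 * \<alpha>)"
    by (subst powr_add[symmetric]) simp
  finally show ?thesis .
qed

lemma geom_mean3_le_sum:
  fixes a b c \<theta> :: real
  assumes "0 < a" "0 < b" "0 < c" "0 \<le> \<theta>" "\<theta> \<le> 1/2"
  shows "a powr (1 - 2*\<theta>) * b powr \<theta> * c powr \<theta> \<le> a + b + c"
proof -
  define g where "g = b powr (1/2) * c powr (1/2)"
  have "g \<le> 1/2 * b + 1/2 * c"
    using Youngs_inequality_0[of "1/2" "1/2" b c] assms by (simp add: g_def)
  have "b powr \<theta> * c powr \<theta> = g powr (2*\<theta>)"
    using assms by (simp add: g_def powr_mult powr_powr)
  then have "a powr (1 - 2*\<theta>) * b powr \<theta> * c powr \<theta> = a powr (1 - 2*\<theta>) * g powr (2*\<theta>)"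
    by simp
  also have "\<dots> \<le> (1 - 2*\<theta>) * a + 2*\<theta> * g"
    using assms by (intro Youngs_inequality_0) (auto simp: g_def)
  also have "\<dots> \<le> a + b + c"
  proof -
    have "2*\<theta> * g \<le> g" "(1 - 2*\<theta>) * a \<le> a"
      using assms by (auto simp: g_def intro!: mult_left_le_one_le)
    with \<open>g \<le> 1/2 * b + 1/2 * c\<close> assms show ?thesis
      by linarith
  qed
  finally show ?thesis .
qed

text \<open>The powers of \<open>h\<close> make all terms homogeneous of the same degree.\<close>

lemma powr_triple_le_three_terms:
  fixes x y w h P r \<theta> a b :: real
  assumes "0 < x" "0 < y" "0 < w" "0 < h" "0 \<le> \<theta>" "\<theta> \<le> 1/2"
    and "a = P * (1 - \<theta>)" "b = 2 * \<theta> * r"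
  shows "x powr (-a) * y powr (-a) * w powr (-b)
           \<le> h powr (2*P - 2*a - b) * (x powr (-P) * y powr (-P))
             + h powr (P + r - 2*a - b) * (x powr (-P) * w powr (-r) + y powr (-P) * w powr (-r))"
proof -
  define A where "A = h powr (2*P - 2*a - b) * (x powr (-P) * y powr (-P))"
  define B where "B = h powr (P + r - 2*a - b) * (x powr (-P) * w powr (-r))"
  define C where "C = h powr (P + r - 2*a - b) * (y powr (-P) * w powr (-r))"
  have "x powr (-a) * y powr (-a) * w powr (-b) = A powr (1 - 2*\<theta>) * B powr \<theta> * C powr \<theta>"
    using assms(1-6) unfolding A_def B_def C_def assms(7,8)
    by (simp add: powr_def ln_mult exp_add[symmetric] algebra_simps)
  also have "\<dots> \<le> A + B + C"
    using assms by (intro geom_mean3_le_sum) (auto simp: A_def B_def C_def)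
  finally show ?thesis
    by (simp add: A_def B_def C_def distrib_left add.assoc)
qed

text \<open>This is where \<open>\<alpha> > 1 - H\<close> enters, as \<open>a + b/2 < 1\<close> with \<open>a = 1 - \<alpha>\<close> and \<open>b = 2 - 2H\<close>.\<close>

lemma exponent_splitting:
  fixes a b :: real
  assumes "0 \<le> a" "0 \<le> b" "b < 1" "a + b/2 < 1"
  obtains P r \<theta> where "0 \<le> P" "P < 1" "0 \<le> r" "r < 1" "0 \<le> \<theta>" "\<theta> \<le> 1/2"
    "a = P * (1 - \<theta>)" "b = 2 * \<theta> * r"
proof -
  define M where "M = max b (b / (2 * (1 - a)))"
  have M: "b \<le> M" "b / (2 * (1 - a)) \<le> M" "M < 1"
    using assms by (auto simp: M_def field_simps)
  define r where "r = (1 + M) / 2"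
  have r: "M < r" "r < 1" "0 < r"
    using M assms by (auto simp: r_def)
  define \<theta> where "\<theta> = b / (2 * r)"
  have \<theta>: "0 \<le> \<theta>" "\<theta> \<le> 1/2"
    using assms M r by (auto simp: \<theta>_def field_simps)
  have "\<theta> < 1 - a"
  proof -
    have "0 < 1 - a"
      using assms by linarith
    then have "b \<le> M * (2 * (1 - a))"
      using M(2) by (simp add: divide_le_eq)
    also have "\<dots> < r * (2 * (1 - a))"
      using r \<open>0 < 1 - a\<close> by (intro mult_strict_right_mono) auto
    finally have "b < r * (2 * (1 - a))" .
    then show ?thesis
      using r by (simp add: \<theta>_def field_simps)
  qed
  show thesis
  proof (rule that[of "a / (1 - \<theta>)" r \<theta>])
    show "a / (1 - \<theta>) < 1" "a = a / (1 - \<theta>) * (1 - \<theta>)"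
      using \<open>\<theta> < 1 - a\<close> \<theta> by (auto simp: field_simps)
    show "b = 2 * \<theta> * r"
      using r by (simp add: \<theta>_def)
  qed (use assms r \<theta> in auto)
qed

section \<open>Riesz energies\<close>

context pair_sigma_finite
begin

lemma nn_integral_fst_mult_le:
  fixes f :: "'a \<Rightarrow> real" and k :: "'a \<times> 'b \<Rightarrow> real"
  assumes [measurable]: "f \<in> borel_measurable M1" "k \<in> borel_measurable (M1 \<Otimes>\<^sub>M M2)"
    and "\<And>x. 0 \<le> f x" "\<And>z. 0 \<le> k z"
    and bound: "\<And>x. (\<integral>\<^sup>+y. ennreal (k (x, y)) \<partial>M2) \<le> B"
  shows "(\<integral>\<^sup>+z. ennreal (f (fst z) * k z) \<partial>(M1 \<Otimes>\<^sub>M M2)) \<le> (\<integral>\<^sup>+x. ennreal (f x) \<partial>M1) * B"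
proof -
  have "(\<integral>\<^sup>+z. ennreal (f (fst z) * k z) \<partial>(M1 \<Otimes>\<^sub>M M2))
          = (\<integral>\<^sup>+x. \<integral>\<^sup>+y. ennreal (f x) * ennreal (k (x, y)) \<partial>M2 \<partial>M1)"
    using assms by (simp add: M2.nn_integral_fst[symmetric] ennreal_mult)
  also have "\<dots> = (\<integral>\<^sup>+x. ennreal (f x) * (\<integral>\<^sup>+y. ennreal (k (x, y)) \<partial>M2) \<partial>M1)"
    by (intro nn_integral_cong nn_integral_cmult) measurable
  also have "\<dots> \<le> (\<integral>\<^sup>+x. ennreal (f x) * B \<partial>M1)"
    by (intro nn_integral_mono mult_left_mono bound) auto
  finally show ?thesis
    by (simp add: nn_integral_multc)
qed

lemma nn_integral_snd_mult_le:
  fixes g :: "'b \<Rightarrow> real" and k :: "'a \<times> 'b \<Rightarrow> real"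
  assumes [measurable]: "g \<in> borel_measurable M2" "k \<in> borel_measurable (M1 \<Otimes>\<^sub>M M2)"
    and "\<And>y. 0 \<le> g y" "\<And>z. 0 \<le> k z"
    and bound: "\<And>y. (\<integral>\<^sup>+x. ennreal (k (x, y)) \<partial>M1) \<le> B"
  shows "(\<integral>\<^sup>+z. ennreal (g (snd z) * k z) \<partial>(M1 \<Otimes>\<^sub>M M2)) \<le> (\<integral>\<^sup>+y. ennreal (g y) \<partial>M2) * B"
proof -
  have "(\<integral>\<^sup>+z. ennreal (g (snd z) * k z) \<partial>(M1 \<Otimes>\<^sub>M M2))
          = (\<integral>\<^sup>+y. \<integral>\<^sup>+x. ennreal (g y) * ennreal (k (x, y)) \<partial>M1 \<partial>M2)"
    using assms by (simp add: nn_integral_snd[symmetric] ennreal_mult)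
  also have "\<dots> = (\<integral>\<^sup>+y. ennreal (g y) * (\<integral>\<^sup>+x. ennreal (k (x, y)) \<partial>M1) \<partial>M2)"
    by (intro nn_integral_cong nn_integral_cmult) measurable
  also have "\<dots> \<le> (\<integral>\<^sup>+y. ennreal (g y) * B \<partial>M2)"
    by (intro nn_integral_mono mult_left_mono bound) auto
  finally show ?thesis
    by (simp add: nn_integral_multc)
qed

end

text \<open>For \<open>b = 2 - 2H\<close> this is, up to the factor \<open>H (2H - 1)\<close>, the covariance of the
  Wiener integrals of \<open>f\<close> and \<open>g\<close> against fractional Brownian motion.\<close>

definition riesz_energy :: "real \<Rightarrow> (real \<Rightarrow> real) \<Rightarrow> (real \<Rightarrow> real) \<Rightarrow> ennreal" where
  "riesz_energy b f g =
     (\<integral>\<^sup>+z. ennreal (f (fst z) * g (snd z) * \<bar>fst z - snd z\<bar> powr (-b)) \<partial>(lborel \<Otimes>\<^sub>M lborel))"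

lemma riesz_energy_mono:
  assumes "\<And>u. 0 \<le> f u" "\<And>u. f u \<le> f' u" "\<And>v. 0 \<le> g v" "\<And>v. g v \<le> g' v"
  shows "riesz_energy b f g \<le> riesz_energy b f' g'"
  unfolding riesz_energy_def
  using assms by (intro nn_integral_mono ennreal_leI mult_right_mono mult_mono) (auto intro: order.trans)

lemma riesz_energy_add_left:
  assumes [measurable]: "f1 \<in> borel_measurable borel" "f2 \<in> borel_measurable borel" "g \<in> borel_measurable borel"
    and "\<And>u. 0 \<le> f1 u" "\<And>u. 0 \<le> f2 u" "\<And>v. 0 \<le> g v"
  shows "riesz_energy b (\<lambda>u. f1 u + f2 u) g = riesz_energy b f1 g + riesz_energy b f2 g"
  unfolding riesz_energy_def
  using assms by (subst nn_integral_add[symmetric]) (auto simp: distrib_right intro!: nn_integral_cong)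

lemma riesz_energy_add_right:
  assumes [measurable]: "f \<in> borel_measurable borel" "g1 \<in> borel_measurable borel" "g2 \<in> borel_measurable borel"
    and "\<And>u. 0 \<le> f u" "\<And>v. 0 \<le> g1 v" "\<And>v. 0 \<le> g2 v"
  shows "riesz_energy b f (\<lambda>v. g1 v + g2 v) = riesz_energy b f g1 + riesz_energy b f g2"
  unfolding riesz_energy_def
  using assms by (subst nn_integral_add[symmetric]) (auto simp: distrib_left distrib_right intro!: nn_integral_cong)

lemma riesz_energy_cmult_left:
  assumes [measurable]: "f \<in> borel_measurable borel" "g \<in> borel_measurable borel" and "0 \<le> c"
  shows "riesz_energy b (\<lambda>u. c * f u) g = ennreal c * riesz_energy b f g"
  unfolding riesz_energy_def
  using assms by (subst nn_integral_cmult[symmetric]) (auto simp: ennreal_mult' mult.assoc intro!: nn_integral_cong)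

lemma riesz_energy_commute:
  assumes [measurable]: "f \<in> borel_measurable borel" "g \<in> borel_measurable borel"
  shows "riesz_energy b f g = riesz_energy b g f"
proof -
  have "riesz_energy b f g
      = (\<integral>\<^sup>+v. \<integral>\<^sup>+u. ennreal (f u * g v * \<bar>u - v\<bar> powr (-b)) \<partial>lborel \<partial>lborel)"
    unfolding riesz_energy_def by (subst lborel_pair.nn_integral_snd[symmetric]) auto
  also have "\<dots> = riesz_energy b g f"
    unfolding riesz_energy_def
    by (subst lborel.nn_integral_fst[symmetric]) (auto simp: mult.commute abs_minus_commute)
  finally show ?thesis .
qed

lemma nn_integral_square_eq_riesz_energy:
  "(\<integral>\<^sup>+ (u, v). ennreal (indicator (S \<times> S) (u, v) * f u * g v * \<bar>u - v\<bar> powr (-b)) \<partial>(lborel \<Otimes>\<^sub>M lborel))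
     = riesz_energy b (\<lambda>u. indicator S u * f u) (\<lambda>v. indicator S v * g v)"
  unfolding riesz_energy_def by (intro nn_integral_cong) (auto simp: indicator_def)

lemma riesz_energy_interval_le:
  fixes f :: "real \<Rightarrow> real"
  assumes [measurable]: "f \<in> borel_measurable borel"
    and "\<And>u. 0 \<le> f u" "0 \<le> r" "r < 1" "0 < l"
  shows "riesz_energy r f (indicator {a..a+l})
           \<le> (\<integral>\<^sup>+u. ennreal (f u) \<partial>lborel) * ennreal ((2 / (1 - r) + 1) * l powr (1 - r))"
proof -
  define k where "k = (\<lambda>z::real \<times> real. indicator {a..a+l} (snd z) * \<bar>fst z - snd z\<bar> powr (-r))"
  have [measurable]: "k \<in> borel_measurable (lborel \<Otimes>\<^sub>M lborel)"
    unfolding k_def by measurable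
  have "(\<integral>\<^sup>+v. ennreal (k (u, v)) \<partial>lborel) \<le> ennreal ((2 / (1 - r) + 1) * l powr (1 - r))" for u
    using nn_integral_interval_abs_powr_le[of r l a u] assms by (simp add: k_def abs_minus_commute)
  then show ?thesis
    unfolding riesz_energy_def using assms
    by (subst mult.assoc, intro lborel_pair.nn_integral_fst_mult_le[where k = k, unfolded k_def]) (auto simp: k_def)
qed

lemma riesz_energy_separated_le:
  fixes f g :: "real \<Rightarrow> real"
  assumes [measurable]: "f \<in> borel_measurable borel" "g \<in> borel_measurable borel"
    and "\<And>u. 0 \<le> f u" "\<And>v. 0 \<le> g v" "0 < \<delta>" "0 \<le> b"
    and separated: "\<And>u v. f u \<noteq> 0 \<Longrightarrow> g v \<noteq> 0 \<Longrightarrow> \<delta> \<le> \<bar>u - v\<bar>"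
  shows "riesz_energy b f g
           \<le> ennreal (\<delta> powr (-b)) * ((\<integral>\<^sup>+u. ennreal (f u) \<partial>lborel) * (\<integral>\<^sup>+v. ennreal (g v) \<partial>lborel))"
proof -
  have "f u * g v * \<bar>u - v\<bar> powr (-b) \<le> \<delta> powr (-b) * (f u * g v)" for u v
  proof (cases "f u = 0 \<or> g v = 0")
    case False
    then have "\<bar>u - v\<bar> powr (-b) \<le> \<delta> powr (-b)"
      using separated assms by (intro powr_mono2') auto
    moreover have "0 \<le> f u * g v"
      using assms by simp
    ultimately show ?thesis
      by (metis mult.commute mult_left_mono)
  qed auto
  then have "riesz_energy b f g \<le> (\<integral>\<^sup>+z. ennreal (\<delta> powr (-b)) * ennreal (f (fst z) * g (snd z)) \<partial>(lborel \<Otimes>\<^sub>M lborel))"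
    unfolding riesz_energy_def by (intro nn_integral_mono) (simp add: ennreal_leI flip: ennreal_mult')
  also have "\<dots> = ennreal (\<delta> powr (-b)) * (\<integral>\<^sup>+z. ennreal (f (fst z) * g (snd z)) \<partial>(lborel \<Otimes>\<^sub>M lborel))"
    by (rule nn_integral_cmult) measurable
  also have "\<dots> \<le> ennreal (\<delta> powr (-b)) * ((\<integral>\<^sup>+u. ennreal (f u) \<partial>lborel) * (\<integral>\<^sup>+v. ennreal (g v) \<partial>lborel))"
    using assms by (intro mult_left_mono lborel_pair.nn_integral_fst_mult_le) auto
  finally show ?thesis .
qed

lemma riesz_energy_tail_le:
  fixes g :: "real \<Rightarrow> real"
  assumes [measurable]: "g \<in> borel_measurable borel"
    and "\<And>v. 0 \<le> g v" "c < -1" "0 \<le> b" "b < 1" "0 < R"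
  shows "riesz_energy b (\<lambda>u. indicator {R..} (p - u) * (p - u) powr c) g
           \<le> ennreal ((2 / (1 - b) + 1 / (- c - 1)) * R powr (c + 1 - b)) * (\<integral>\<^sup>+v. ennreal (g v) \<partial>lborel)"
proof -
  define k where "k = (\<lambda>z::real \<times> real. indicator {R..} (p - fst z) * (p - fst z) powr c * \<bar>fst z - snd z\<bar> powr (-b))"
  have [measurable]: "k \<in> borel_measurable (lborel \<Otimes>\<^sub>M lborel)"
    unfolding k_def by measurable
  have "(\<integral>\<^sup>+u. ennreal (k (u, v)) \<partial>lborel)
      = (\<integral>\<^sup>+x. ennreal (indicator {R..} x * x powr c * \<bar>x - (p - v)\<bar> powr (-b)) \<partial>lborel)" for v
    unfolding k_def
    by (subst nn_integral_lborel_reflect[symmetric, of _ p]) (auto simp: abs_minus_commute intro!: nn_integral_cong)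
  also have "\<dots> v \<le> ennreal ((2 / (1 - b) + 1 / (- c - 1)) * R powr (c + 1 - b))" for v
    using assms by (intro nn_integral_tail_powr_abs_powr_le)
  finally have "riesz_energy b (\<lambda>u. indicator {R..} (p - u) * (p - u) powr c) g
      \<le> (\<integral>\<^sup>+v. ennreal (g v) \<partial>lborel) * ennreal ((2 / (1 - b) + 1 / (- c - 1)) * R powr (c + 1 - b))"
    unfolding riesz_energy_def
    by (subst mult.commute, subst mult.assoc, intro lborel_pair.nn_integral_snd_mult_le[where k = k, unfolded k_def])
      (use assms in \<open>auto simp: k_def\<close>)
  then show ?thesis
    by (simp add: mult.commute)
qed

lemma singular_box_integrand_le:
  fixes p q h u v P r \<theta> a b :: real
  defines "F \<equiv> \<lambda>u. indicator {p-h..p} u * (p - u) powr (-P)"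
    and "G \<equiv> \<lambda>v. indicator {q-h..q} v * (q - v) powr (-P)"
  assumes h: "0 < h" and \<theta>: "0 \<le> \<theta>" "\<theta> \<le> 1/2" and ab: "a = P * (1 - \<theta>)" "b = 2 * \<theta> * r"
  shows "indicator {p-h..p} u * (p - u) powr (-a) * (indicator {q-h..q} v * (q - v) powr (-a)) * \<bar>u - v\<bar> powr (-b)
           \<le> h powr (2*P - 2*a - b) * (F u * G v)
             + h powr (P + r - 2*a - b) * (F u * indicator {q-h..q} v * \<bar>u - v\<bar> powr (-r)
                                           + indicator {p-h..p} u * G v * \<bar>u - v\<bar> powr (-r))"
    (is "?lhs \<le> ?rhs")
proof (cases "u \<in> {p-h..<p} \<and> v \<in> {q-h..<q} \<and> u \<noteq> v")
  case True
  then show ?thesis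
    using powr_triple_le_three_terms[OF _ _ _ h \<theta> ab, of "p - u" "q - v" "\<bar>u - v\<bar>"]
    by (simp add: F_def G_def indicator_def algebra_simps)
next
  case False
  then have "?lhs = 0"
    by (auto simp: indicator_def)
  moreover have "0 \<le> ?rhs"
    unfolding F_def G_def by (intro add_nonneg_nonneg mult_nonneg_nonneg) auto
  ultimately show ?thesis
    by linarith
qed

lemma riesz_energy_singular_box_le_weighted:
  fixes h p q P r \<theta> a b :: real
  defines "I \<equiv> h powr (1 - P) / (1 - P)" and "J \<equiv> (2 / (1 - r) + 1) * h powr (1 - r)"
  assumes h: "0 < h" and P: "0 \<le> P" "P < 1" and r: "0 \<le> r" "r < 1" and \<theta>: "0 \<le> \<theta>" "\<theta> \<le> 1/2"
    and ab: "a = P * (1 - \<theta>)" "b = 2 * \<theta> * r"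
  shows "riesz_energy b (\<lambda>u. indicator {p-h..p} u * (p - u) powr (-a)) (\<lambda>v. indicator {q-h..q} v * (q - v) powr (-a))
           \<le> ennreal (h powr (2*P - 2*a - b) * I^2 + 2 * h powr (P + r - 2*a - b) * I * J)"
proof -
  define F where "F = (\<lambda>u. indicator {p-h..p} u * (p - u) powr (-P))"
  define G where "G = (\<lambda>v. indicator {q-h..q} v * (q - v) powr (-P))"
  define c1 where "c1 = h powr (2*P - 2*a - b)"
  define c2 where "c2 = h powr (P + r - 2*a - b)"
  have [measurable]: "F \<in> borel_measurable borel" "G \<in> borel_measurable borel"
    unfolding F_def G_def by measurable
  have nonneg: "0 \<le> F u" "0 \<le> G u" "0 \<le> c1" "0 \<le> c2" "0 \<le> I" "0 \<le> J" for u
    using P r by (simp_all add: F_def G_def c1_def c2_def I_def J_def)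
  have int_F: "(\<integral>\<^sup>+u. ennreal (F u) \<partial>lborel) = ennreal I" and int_G: "(\<integral>\<^sup>+v. ennreal (G v) \<partial>lborel) = ennreal I"
    using nn_integral_powr_Icc_reflect[of "-P" h] P h by (simp_all add: F_def G_def I_def)
  have "(\<integral>\<^sup>+z. ennreal (F (fst z) * G (snd z)) \<partial>(lborel \<Otimes>\<^sub>M lborel)) \<le> (\<integral>\<^sup>+u. ennreal (F u) \<partial>lborel) * ennreal I"
    by (rule lborel_pair.nn_integral_fst_mult_le, measurable, measurable) (simp_all add: nonneg int_G)
  then have FG: "(\<integral>\<^sup>+z. ennreal (F (fst z) * G (snd z)) \<partial>(lborel \<Otimes>\<^sub>M lborel)) \<le> ennreal I * ennreal I"
    by (simp only: int_F)
  have FQ: "riesz_energy r F (indicator {q-h..q}) \<le> ennreal I * ennreal J"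
    using riesz_energy_interval_le[of F r h "q - h"] int_F nonneg r h by (simp add: J_def)
  have PG: "riesz_energy r (indicator {p-h..p}) G \<le> ennreal I * ennreal J"
    using riesz_energy_interval_le[of G r h "p - h"] int_G nonneg r h
    by (simp add: J_def riesz_energy_commute[of G])
  have "riesz_energy b (\<lambda>u. indicator {p-h..p} u * (p - u) powr (-a)) (\<lambda>v. indicator {q-h..q} v * (q - v) powr (-a))
      \<le> ennreal c1 * (\<integral>\<^sup>+z. ennreal (F (fst z) * G (snd z)) \<partial>(lborel \<Otimes>\<^sub>M lborel))
        + ennreal c2 * (\<integral>\<^sup>+z. ennreal (F (fst z) * indicator {q-h..q} (snd z) * \<bar>fst z - snd z\<bar> powr (-r)
            + indicator {p-h..p} (fst z) * G (snd z) * \<bar>fst z - snd z\<bar> powr (-r)) \<partial>(lborel \<Otimes>\<^sub>M lborel))"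
    unfolding riesz_energy_def using nonneg
    by (intro nn_integral_le_lincomb) (auto simp: c1_def c2_def F_def G_def intro: singular_box_integrand_le[OF h \<theta> ab])
  also have "(\<integral>\<^sup>+z. ennreal (F (fst z) * indicator {q-h..q} (snd z) * \<bar>fst z - snd z\<bar> powr (-r)
            + indicator {p-h..p} (fst z) * G (snd z) * \<bar>fst z - snd z\<bar> powr (-r)) \<partial>(lborel \<Otimes>\<^sub>M lborel))
      = riesz_energy r F (indicator {q-h..q}) + riesz_energy r (indicator {p-h..p}) G"
    unfolding riesz_energy_def using nonneg by (subst nn_integral_add[symmetric]) auto
  also have "ennreal c1 * (\<integral>\<^sup>+z. ennreal (F (fst z) * G (snd z)) \<partial>(lborel \<Otimes>\<^sub>M lborel))
        + ennreal c2 * (riesz_energy r F (indicator {q-h..q}) + riesz_energy r (indicator {p-h..p}) G)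
      \<le> ennreal c1 * (ennreal I * ennreal I) + ennreal c2 * (ennreal I * ennreal J + ennreal I * ennreal J)"
    using FG FQ PG by (intro add_mono mult_left_mono) auto
  also have "\<dots> = ennreal (c1 * (I * I) + c2 * (I * J + I * J))"
    using nonneg by (simp only: ennreal_mult ennreal_plus mult_nonneg_nonneg add_nonneg_nonneg)
  finally show ?thesis
    by (simp add: c1_def c2_def power2_eq_square algebra_simps)
qed

lemma riesz_energy_singular_box_le:
  fixes a b :: real
  assumes "0 \<le> a" "0 \<le> b" "b < 1" "a + b/2 < 1"
  obtains C where "0 \<le> C" and "\<And>h p q. 0 < h \<Longrightarrow>
      riesz_energy b (\<lambda>u. indicator {p-h..p} u * (p - u) powr (-a)) (\<lambda>v. indicator {q-h..q} v * (q - v) powr (-a))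
        \<le> ennreal (C * h powr (2 - 2*a - b))"
proof -
  obtain P r \<theta> where P: "0 \<le> P" "P < 1" and r: "0 \<le> r" "r < 1" and \<theta>: "0 \<le> \<theta>" "\<theta> \<le> 1/2"
    and ab: "a = P * (1 - \<theta>)" "b = 2 * \<theta> * r"
    using exponent_splitting[OF assms] .
  show thesis
  proof (rule that)
    show "0 \<le> 1 / (1 - P)^2 + 2 * ((2 / (1 - r) + 1) / (1 - P))"
      using P r by (intro add_nonneg_nonneg mult_nonneg_nonneg divide_nonneg_nonneg) auto
  next
    fix h p q :: real
    assume h: "0 < h"
    have "h powr (2*P - 2*a - b) * (h powr (1 - P) * h powr (1 - P)) = h powr (2 - 2*a - b)"
      "h powr (P + r - 2*a - b) * (h powr (1 - P) * h powr (1 - r)) = h powr (2 - 2*a - b)"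
      by (simp_all add: algebra_simps flip: powr_add)
    then have "h powr (2*P - 2*a - b) * (h powr (1 - P) / (1 - P))^2
        + 2 * h powr (P + r - 2*a - b) * (h powr (1 - P) / (1 - P)) * ((2 / (1 - r) + 1) * h powr (1 - r))
      = (1 / (1 - P)^2 + 2 * ((2 / (1 - r) + 1) / (1 - P))) * h powr (2 - 2*a - b)"
      by (simp add: power2_eq_square field_simps)
    with riesz_energy_singular_box_le_weighted[OF h P r \<theta> ab, of p q]
    show "riesz_energy b (\<lambda>u. indicator {p-h..p} u * (p - u) powr (-a)) (\<lambda>v. indicator {q-h..q} v * (q - v) powr (-a))
        \<le> ennreal ((1 / (1 - P)^2 + 2 * ((2 / (1 - r) + 1) / (1 - P))) * h powr (2 - 2*a - b))"
      by simp
  qed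
qed

section \<open>A majorant of the kernel\<close>

definition kernel_majorant :: "real \<Rightarrow> real \<Rightarrow> real \<Rightarrow> real" where
  "kernel_majorant \<alpha> h x = (if 0 < x then min (x powr (\<alpha> - 1)) (h * x powr (\<alpha> - 2)) else 0)"

lemma kernel_majorant_measurable [measurable]: "kernel_majorant \<alpha> h \<in> borel_measurable borel"
  unfolding kernel_majorant_def by measurable

lemma kernel_majorant_nonneg: "0 \<le> h \<Longrightarrow> 0 \<le> kernel_majorant \<alpha> h x"
  by (simp add: kernel_majorant_def)

lemma kernel_majorant_le_powr: "kernel_majorant \<alpha> h x \<le> x powr (\<alpha> - 1)"
  by (simp add: kernel_majorant_def)

lemma kernel_majorant_le_far: "0 < x \<Longrightarrow> kernel_majorant \<alpha> h x \<le> h * x powr (\<alpha> - 2)"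
  by (simp add: kernel_majorant_def)

lemma kernel_majorant_nonpos: "x \<le> 0 \<Longrightarrow> kernel_majorant \<alpha> h x = 0"
  by (simp add: kernel_majorant_def)

lemma nn_integral_kernel_majorant_le:
  assumes "0 < h" "0 < \<alpha>" "\<alpha> < 1"
  shows "(\<integral>\<^sup>+u. ennreal (kernel_majorant \<alpha> h (p - u)) \<partial>lborel) \<le> ennreal ((1/\<alpha> + 1/(1-\<alpha>)) * h powr \<alpha>)"
proof -
  have "kernel_majorant \<alpha> h x \<le> 1 * (indicator {0..h} x * x powr (\<alpha> - 1)) + h * (indicator {h..} x * x powr (\<alpha> - 2))" for x
    using assms by (cases "x \<le> h") (auto simp: kernel_majorant_def indicator_def intro: add_increasing2)
  then have "(\<integral>\<^sup>+x. ennreal (kernel_majorant \<alpha> h x) \<partial>lborel)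
      \<le> ennreal 1 * (\<integral>\<^sup>+x. ennreal (indicator {0..h} x * x powr (\<alpha> - 1)) \<partial>lborel)
        + ennreal h * (\<integral>\<^sup>+x. ennreal (indicator {h..} x * x powr (\<alpha> - 2)) \<partial>lborel)"
    using assms by (intro nn_integral_le_lincomb) auto
  also have "\<dots> = ennreal (h powr \<alpha> / \<alpha>) + ennreal h * ennreal (h powr (\<alpha> - 1) / (1 - \<alpha>))"
    using assms by (simp add: nn_integral_powr_Icc_0 nn_integral_powr_Ici)
  also have "\<dots> = ennreal (h powr \<alpha> / \<alpha> + h * h powr (\<alpha> - 1) / (1 - \<alpha>))"
    using assms by (simp flip: ennreal_plus ennreal_mult')
  also have "h * h powr (\<alpha> - 1) = h powr \<alpha>"
    using assms by (simp add: powr_diff)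
  finally show ?thesis
    by (subst nn_integral_lborel_reflect) (simp_all add: distrib_right)
qed

lemma Akern_nonneg:
  assumes "shat < s" "\<alpha> \<le> 1"
  shows "0 \<le> Akern \<alpha> shat s u"
proof -
  have "(s - u) powr (\<alpha> - 1) \<le> (shat - u) powr (\<alpha> - 1)" if "u < shat"
    using that assms by (intro powr_mono2') auto
  then show ?thesis
    by (auto simp: Akern_def indicator_def)
qed

lemma Akern_le_kernel_majorant:
  assumes "shat < s" "s \<le> shat + h" "0 \<le> \<alpha>"
  shows "Akern \<alpha> shat s u \<le> kernel_majorant \<alpha> h (shat - u) + kernel_majorant \<alpha> h (s - u)"
proof -
  have h: "0 < h" using assms by linarith
  consider "0 < u" "u < shat" | "shat < u" "u < s" | "Akern \<alpha> shat s u = 0"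
    by (fastforce simp: Akern_def indicator_def)
  then show ?thesis
  proof cases
    case 1
    then have "Akern \<alpha> shat s u = (shat - u) powr (\<alpha> - 1) - (shat - u + (s - shat)) powr (\<alpha> - 1)"
      by (simp add: Akern_def indicator_def)
    also have "\<dots> \<le> kernel_majorant \<alpha> h (shat - u)"
    proof -
      have "(shat - u) powr (\<alpha> - 1) - (shat - u + (s - shat)) powr (\<alpha> - 1) \<le> (s - shat) * (shat - u) powr (\<alpha> - 2)"
        using 1 assms powr_diff_powr_add_le[of "shat - u" "s - shat" "\<alpha> - 1"] by simp
      also have "\<dots> \<le> h * (shat - u) powr (\<alpha> - 2)"
        using assms by (intro mult_right_mono) auto
      finally show ?thesis
        using 1 by (simp add: kernel_majorant_def)
    qed
    finally show ?thesis
      using kernel_majorant_nonneg[of h \<alpha> "s - u"] h by linarith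
  next
    case 2
    have "(s - u) powr (\<alpha> - 1) = (s - u) * (s - u) powr (\<alpha> - 2)"
      using 2 powr_add[of "s - u" 1 "\<alpha> - 2"] by simp
    also have "\<dots> \<le> h * (s - u) powr (\<alpha> - 2)"
      using 2 assms by (intro mult_right_mono) auto
    finally have "kernel_majorant \<alpha> h (s - u) = (s - u) powr (\<alpha> - 1)"
      using 2 by (simp add: kernel_majorant_def)
    moreover have "Akern \<alpha> shat s u = (s - u) powr (\<alpha> - 1)"
      using 2 by (simp add: Akern_def indicator_def)
    ultimately show ?thesis
      using kernel_majorant_nonneg[of h \<alpha> "shat - u"] h by linarith
  next
    case 3
    then show ?thesis
      using h by (simp add: kernel_majorant_nonneg)
  qed
qed

section \<open>Energy of the majorant\<close>

lemma riesz_energy_kernel_majorant_tail_le: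
  assumes "0 < h" "h \<le> R" "0 < \<alpha>" "\<alpha> < 1" "0 \<le> b" "b < 1"
  shows "riesz_energy b (\<lambda>u. h * (indicator {R..} (p - u) * (p - u) powr (\<alpha> - 2))) (\<lambda>v. kernel_majorant \<alpha> h (q - v))
           \<le> ennreal ((2 / (1 - b) + 1 / (1 - \<alpha>)) * (1 / \<alpha> + 1 / (1 - \<alpha>)) * h powr (2 * \<alpha>) * R powr (-b))"
proof -
  define CF where "CF = 2 / (1 - b) + 1 / (1 - \<alpha>)"
  define Cm where "Cm = 1 / \<alpha> + 1 / (1 - \<alpha>)"
  have "0 \<le> CF" "0 \<le> Cm"
    using assms by (simp_all add: CF_def Cm_def)
  have "riesz_energy b (\<lambda>u. h * (indicator {R..} (p - u) * (p - u) powr (\<alpha> - 2))) (\<lambda>v. kernel_majorant \<alpha> h (q - v))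
      = ennreal h * riesz_energy b (\<lambda>u. indicator {R..} (p - u) * (p - u) powr (\<alpha> - 2)) (\<lambda>v. kernel_majorant \<alpha> h (q - v))"
    using assms by (intro riesz_energy_cmult_left) auto
  also have "\<dots> \<le> ennreal h * (ennreal (CF * R powr (\<alpha> - 1 - b)) * (\<integral>\<^sup>+v. ennreal (kernel_majorant \<alpha> h (q - v)) \<partial>lborel))"
  proof (intro mult_left_mono)
    have "- (\<alpha> - 2) - 1 = 1 - \<alpha>" "\<alpha> - 2 + 1 - b = \<alpha> - 1 - b"
      by simp_all
    then show "riesz_energy b (\<lambda>u. indicator {R..} (p - u) * (p - u) powr (\<alpha> - 2)) (\<lambda>v. kernel_majorant \<alpha> h (q - v))
        \<le> ennreal (CF * R powr (\<alpha> - 1 - b)) * (\<integral>\<^sup>+v. ennreal (kernel_majorant \<alpha> h (q - v)) \<partial>lborel)"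
      using riesz_energy_tail_le[where g = "\<lambda>v. kernel_majorant \<alpha> h (q - v)" and c = "\<alpha> - 2"] assms
      by (simp add: CF_def kernel_majorant_nonneg)
  qed simp
  also have "\<dots> \<le> ennreal h * (ennreal (CF * R powr (\<alpha> - 1 - b)) * ennreal (Cm * h powr \<alpha>))"
    using nn_integral_kernel_majorant_le[of h \<alpha> q] assms by (intro mult_left_mono) (auto simp: Cm_def)
  also have "\<dots> = ennreal (CF * Cm * (h powr (1 + \<alpha>) * R powr (\<alpha> - 1 - b)))"
    using assms \<open>0 \<le> CF\<close> \<open>0 \<le> Cm\<close> by (simp add: powr_add ennreal_mult mult_ac)
  also have "\<dots> \<le> ennreal (CF * Cm * (h powr (2 * \<alpha>) * R powr (-b)))"
    using assms \<open>0 \<le> CF\<close> \<open>0 \<le> Cm\<close> powr_tail_factor_le[of h R \<alpha> b]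
    by (intro ennreal_leI mult_left_mono mult_nonneg_nonneg) auto
  finally show ?thesis
    by (simp add: CF_def Cm_def mult.assoc)
qed

lemma riesz_energy_kernel_majorant_split:
  assumes "0 < h" "h \<le> R" "0 < \<alpha>" "\<alpha> < 1" "0 \<le> b" "b < 1"
  shows "riesz_energy b (\<lambda>u. kernel_majorant \<alpha> h (p - u)) (\<lambda>v. kernel_majorant \<alpha> h (q - v))
     \<le> riesz_energy b (\<lambda>u. indicator {..<R} (p - u) * kernel_majorant \<alpha> h (p - u))
                      (\<lambda>v. indicator {..<R} (q - v) * kernel_majorant \<alpha> h (q - v))
       + ennreal (2 * ((2 / (1 - b) + 1 / (1 - \<alpha>)) * (1 / \<alpha> + 1 / (1 - \<alpha>)) * h powr (2 * \<alpha>) * R powr (-b)))"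
proof -
  define m where "m = (\<lambda>p u. kernel_majorant \<alpha> h (p - u))"
  define n where "n = (\<lambda>p u. indicator {..<R} (p - u) * kernel_majorant \<alpha> h (p - u))"
  define t where "t = (\<lambda>p u. h * (indicator {R..} (p - u) * (p - u) powr (\<alpha> - 2)))"
  define B where "B = (2 / (1 - b) + 1 / (1 - \<alpha>)) * (1 / \<alpha> + 1 / (1 - \<alpha>)) * h powr (2 * \<alpha>) * R powr (-b)"
  have "0 \<le> B"
    unfolding B_def using assms by (intro mult_nonneg_nonneg add_nonneg_nonneg) auto
  have [measurable]: "m p \<in> borel_measurable borel" "n p \<in> borel_measurable borel" "t p \<in> borel_measurable borel" for p
    unfolding m_def n_def t_def by measurable
  have nonneg: "0 \<le> m p u" "0 \<le> n p u" "0 \<le> t p u" for p u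
    using assms by (auto simp: m_def n_def t_def kernel_majorant_nonneg)
  have m_le: "m p u \<le> n p u + t p u" for p u
    using assms kernel_majorant_le_far[of "p - u" \<alpha> h]
    by (cases "p - u < R") (auto simp: m_def n_def t_def)
  have n_le: "n p u \<le> m p u" for p u
    using assms by (auto simp: m_def n_def indicator_def kernel_majorant_nonneg)
  have tail: "riesz_energy b (t p) (m q) \<le> ennreal B" for p q
    unfolding t_def m_def B_def using assms by (rule riesz_energy_kernel_majorant_tail_le)
  have "riesz_energy b (m p) (m q) \<le> riesz_energy b (\<lambda>u. n p u + t p u) (m q)"
    using nonneg m_le by (intro riesz_energy_mono) auto
  also have "\<dots> = riesz_energy b (n p) (m q) + riesz_energy b (t p) (m q)"
    using nonneg by (intro riesz_energy_add_left) auto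
  also have "riesz_energy b (n p) (m q) \<le> riesz_energy b (n p) (\<lambda>v. n q v + t q v)"
    using nonneg m_le by (intro riesz_energy_mono) auto
  also have "\<dots> = riesz_energy b (n p) (n q) + riesz_energy b (n p) (t q)"
    using nonneg by (intro riesz_energy_add_right) auto
  also have "riesz_energy b (n p) (t q) \<le> riesz_energy b (m p) (t q)"
    using nonneg n_le by (intro riesz_energy_mono) auto
  also have "\<dots> = riesz_energy b (t q) (m p)"
    by (rule riesz_energy_commute) measurable
  finally have "riesz_energy b (m p) (m q)
      \<le> riesz_energy b (n p) (n q) + riesz_energy b (t q) (m p) + riesz_energy b (t p) (m q)"
    by (auto intro!: add_mono)
  also have "\<dots> \<le> riesz_energy b (n p) (n q) + ennreal B + ennreal B"
    by (intro add_mono order_refl tail)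
  also have "\<dots> = riesz_energy b (n p) (n q) + ennreal (B + B)"
    using \<open>0 \<le> B\<close> by (simp only: add.assoc ennreal_plus)
  finally show ?thesis
    by (simp only: m_def n_def B_def mult_2)
qed

lemma riesz_energy_truncated_majorant_far_le:
  assumes "0 < h" "0 < \<alpha>" "\<alpha> < 1" "0 \<le> b" "0 < R" "2 * R \<le> \<bar>q - p\<bar>"
  shows "riesz_energy b (\<lambda>u. indicator {..<R} (p - u) * kernel_majorant \<alpha> h (p - u))
                        (\<lambda>v. indicator {..<R} (q - v) * kernel_majorant \<alpha> h (q - v))
           \<le> ennreal ((1 / \<alpha> + 1 / (1 - \<alpha>))^2 * h powr (2 * \<alpha>) * R powr (-b))"
proof -
  define n where "n = (\<lambda>p u. indicator {..<R} (p - u) * kernel_majorant \<alpha> h (p - u))"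
  define M where "M = (1 / \<alpha> + 1 / (1 - \<alpha>)) * h powr \<alpha>"
  have meas: "n p' \<in> borel_measurable borel" for p'
    unfolding n_def by measurable
  have n_nonzero: "0 < p' - u \<and> p' - u < R" if "n p' u \<noteq> 0" for p' u
  proof
    show "0 < p' - u"
      using that by (rule contrapos_np) (simp add: n_def kernel_majorant_nonpos)
    show "p' - u < R"
      using that by (rule contrapos_np) (simp add: n_def)
  qed
  have int_n: "(\<integral>\<^sup>+u. ennreal (n p' u) \<partial>lborel) \<le> ennreal M" for p'
  proof -
    have "(\<integral>\<^sup>+u. ennreal (n p' u) \<partial>lborel) \<le> (\<integral>\<^sup>+u. ennreal (kernel_majorant \<alpha> h (p' - u)) \<partial>lborel)"
      using assms by (intro nn_integral_mono ennreal_leI) (auto simp: n_def indicator_def kernel_majorant_nonneg)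
    also have "\<dots> \<le> ennreal M"
      unfolding M_def using assms by (intro nn_integral_kernel_majorant_le)
    finally show ?thesis .
  qed
  have "riesz_energy b (n p) (n q)
      \<le> ennreal (R powr (-b)) * ((\<integral>\<^sup>+u. ennreal (n p u) \<partial>lborel) * (\<integral>\<^sup>+v. ennreal (n q v) \<partial>lborel))"
  proof (rule riesz_energy_separated_le[OF meas meas])
    fix u v
    assume "n p u \<noteq> 0" "n q v \<noteq> 0"
    then show "R \<le> \<bar>u - v\<bar>"
      using n_nonzero[of p u] n_nonzero[of q v] assms by linarith
  qed (use assms in \<open>auto simp: n_def kernel_majorant_nonneg\<close>)
  also have "\<dots> \<le> ennreal (R powr (-b)) * (ennreal M * ennreal M)"
    by (intro mult_left_mono mult_mono int_n) auto
  also have "\<dots> = ennreal (R powr (-b) * (M * M))"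
    using assms by (simp add: M_def ennreal_mult)
  also have "R powr (-b) * (M * M) = (1 / \<alpha> + 1 / (1 - \<alpha>))^2 * (h powr \<alpha> * h powr \<alpha>) * R powr (-b)"
    by (simp add: M_def power2_eq_square mult_ac)
  also have "h powr \<alpha> * h powr \<alpha> = h powr (2 * \<alpha>)"
    by (subst powr_add[symmetric]) simp
  finally show ?thesis
    by (simp add: n_def)
qed

lemma riesz_energy_truncated_majorant_near_le:
  assumes "0 < \<alpha>" "\<alpha> < 1" "0 \<le> b" "b < 1" "b < 2 * \<alpha>"
  obtains C where "0 \<le> C" and "\<And>h p q. 0 < h \<Longrightarrow>
      riesz_energy b (\<lambda>u. indicator {..<h} (p - u) * kernel_majorant \<alpha> h (p - u))
                     (\<lambda>v. indicator {..<h} (q - v) * kernel_majorant \<alpha> h (q - v))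
        \<le> ennreal (C * h powr (2 * \<alpha>) * h powr (-b))"
proof -
  obtain C where "0 \<le> C" and box: "\<And>h p q. 0 < h \<Longrightarrow>
      riesz_energy b (\<lambda>u. indicator {p-h..p} u * (p - u) powr (-(1 - \<alpha>)))
                     (\<lambda>v. indicator {q-h..q} v * (q - v) powr (-(1 - \<alpha>)))
        \<le> ennreal (C * h powr (2 - 2 * (1 - \<alpha>) - b))"
    by (rule riesz_energy_singular_box_le[of "1 - \<alpha>" b]) (use assms in auto)
  show thesis
  proof (rule that[OF \<open>0 \<le> C\<close>])
    fix h p q :: real
    assume h: "0 < h"
    have truncated_le: "indicator {..<h} (p' - u) * kernel_majorant \<alpha> h (p' - u)
        \<le> indicator {p'-h..p'} u * (p' - u) powr (-(1 - \<alpha>))" for p' u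
      using kernel_majorant_le_powr[of \<alpha> h "p' - u"] kernel_majorant_nonpos[of "p' - u" \<alpha> h]
      by (cases "0 < p' - u") (auto simp: indicator_def)
    have "riesz_energy b (\<lambda>u. indicator {..<h} (p - u) * kernel_majorant \<alpha> h (p - u))
                         (\<lambda>v. indicator {..<h} (q - v) * kernel_majorant \<alpha> h (q - v))
        \<le> riesz_energy b (\<lambda>u. indicator {p-h..p} u * (p - u) powr (-(1 - \<alpha>)))
                         (\<lambda>v. indicator {q-h..q} v * (q - v) powr (-(1 - \<alpha>)))"
      using h truncated_le by (intro riesz_energy_mono) (auto simp: kernel_majorant_nonneg)
    also have "\<dots> \<le> ennreal (C * h powr (2 - 2 * (1 - \<alpha>) - b))"
      using box[OF h] .
    also have "h powr (2 - 2 * (1 - \<alpha>) - b) = h powr (2 * \<alpha>) * h powr (-b)"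
      by (simp add: powr_add[symmetric])
    finally show "riesz_energy b (\<lambda>u. indicator {..<h} (p - u) * kernel_majorant \<alpha> h (p - u))
                   (\<lambda>v. indicator {..<h} (q - v) * kernel_majorant \<alpha> h (q - v))
        \<le> ennreal (C * h powr (2 * \<alpha>) * h powr (-b))"
      by (simp add: mult.assoc)
  qed
qed

lemma riesz_energy_kernel_majorant_le_of_core:
  assumes "0 < h" "h \<le> R" "0 < \<alpha>" "\<alpha> < 1" "0 \<le> b" "b < 1" "0 \<le> C"
    and core: "riesz_energy b (\<lambda>u. indicator {..<R} (p - u) * kernel_majorant \<alpha> h (p - u))
                              (\<lambda>v. indicator {..<R} (q - v) * kernel_majorant \<alpha> h (q - v))
                 \<le> ennreal (C * h powr (2 * \<alpha>) * R powr (-b))"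
  shows "riesz_energy b (\<lambda>u. kernel_majorant \<alpha> h (p - u)) (\<lambda>v. kernel_majorant \<alpha> h (q - v))
           \<le> ennreal ((C + 2 * ((2 / (1 - b) + 1 / (1 - \<alpha>)) * (1 / \<alpha> + 1 / (1 - \<alpha>)))) * h powr (2 * \<alpha>) * R powr (-b))"
proof -
  define B where "B = (2 / (1 - b) + 1 / (1 - \<alpha>)) * (1 / \<alpha> + 1 / (1 - \<alpha>))"
  have "0 \<le> B"
    unfolding B_def using assms by (intro mult_nonneg_nonneg add_nonneg_nonneg) auto
  have "riesz_energy b (\<lambda>u. kernel_majorant \<alpha> h (p - u)) (\<lambda>v. kernel_majorant \<alpha> h (q - v))
      \<le> ennreal (C * h powr (2 * \<alpha>) * R powr (-b)) + ennreal (2 * (B * h powr (2 * \<alpha>) * R powr (-b)))"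
    using riesz_energy_kernel_majorant_split[of h R \<alpha> b p q] core assms
    by (auto simp: B_def mult.assoc intro: order.trans add_right_mono)
  also have "\<dots> = ennreal (C * h powr (2 * \<alpha>) * R powr (-b) + 2 * (B * h powr (2 * \<alpha>) * R powr (-b)))"
    using assms \<open>0 \<le> B\<close> by (intro ennreal_plus[symmetric]) auto
  also have "C * h powr (2 * \<alpha>) * R powr (-b) + 2 * (B * h powr (2 * \<alpha>) * R powr (-b))
      = (C + 2 * B) * h powr (2 * \<alpha>) * R powr (-b)"
    by (simp add: algebra_simps)
  finally show ?thesis
    by (simp only: B_def)
qed

lemma riesz_energy_kernel_majorant_le_max:
  assumes "0 < \<alpha>" "\<alpha> < 1" "0 \<le> b" "b < 1" "b < 2 * \<alpha>"
  obtains C where "0 \<le> C" and "\<And>h p q. 0 < h \<Longrightarrow>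
      riesz_energy b (\<lambda>u. kernel_majorant \<alpha> h (p - u)) (\<lambda>v. kernel_majorant \<alpha> h (q - v))
        \<le> ennreal (C * h powr (2 * \<alpha>) * max h (\<bar>q - p\<bar> / 4) powr (-b))"
proof -
  obtain C0 where "0 \<le> C0" and near: "\<And>h p q. 0 < h \<Longrightarrow>
      riesz_energy b (\<lambda>u. indicator {..<h} (p - u) * kernel_majorant \<alpha> h (p - u))
                     (\<lambda>v. indicator {..<h} (q - v) * kernel_majorant \<alpha> h (q - v))
        \<le> ennreal (C0 * h powr (2 * \<alpha>) * h powr (-b))"
    by (rule riesz_energy_truncated_majorant_near_le[OF assms]) auto
  define Cm where "Cm = 1 / \<alpha> + 1 / (1 - \<alpha>)"
  define B where "B = (2 / (1 - b) + 1 / (1 - \<alpha>)) * Cm"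
  have "0 \<le> Cm" "0 \<le> B"
    using assms by (simp_all add: Cm_def B_def)
  show thesis
  proof (rule that[of "Cm^2 + C0 + 2 * B"])
    show "0 \<le> Cm^2 + C0 + 2 * B"
      using \<open>0 \<le> C0\<close> \<open>0 \<le> B\<close> by simp
  next
    fix h p q :: real
    assume h: "0 < h"
    show "riesz_energy b (\<lambda>u. kernel_majorant \<alpha> h (p - u)) (\<lambda>v. kernel_majorant \<alpha> h (q - v))
        \<le> ennreal ((Cm^2 + C0 + 2 * B) * h powr (2 * \<alpha>) * max h (\<bar>q - p\<bar> / 4) powr (-b))"
    proof (cases "4 * h \<le> \<bar>q - p\<bar>")
      case True
      have "riesz_energy b (\<lambda>u. kernel_majorant \<alpha> h (p - u)) (\<lambda>v. kernel_majorant \<alpha> h (q - v))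
          \<le> ennreal ((Cm^2 + 2 * B) * h powr (2 * \<alpha>) * (\<bar>q - p\<bar> / 4) powr (-b))"
        unfolding B_def Cm_def using True h assms
        by (intro riesz_energy_kernel_majorant_le_of_core riesz_energy_truncated_majorant_far_le) auto
      also have "\<dots> \<le> ennreal ((Cm^2 + C0 + 2 * B) * h powr (2 * \<alpha>) * (\<bar>q - p\<bar> / 4) powr (-b))"
        using \<open>0 \<le> C0\<close> by (intro ennreal_leI mult_right_mono) auto
      finally show ?thesis
        using True by (simp add: max_def)
    next
      case False
      have "riesz_energy b (\<lambda>u. kernel_majorant \<alpha> h (p - u)) (\<lambda>v. kernel_majorant \<alpha> h (q - v))
          \<le> ennreal ((C0 + 2 * B) * h powr (2 * \<alpha>) * h powr (-b))"
        unfolding B_def Cm_def using near[OF h] h assms \<open>0 \<le> C0\<close>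
        by (intro riesz_energy_kernel_majorant_le_of_core) auto
      also have "\<dots> \<le> ennreal ((Cm^2 + C0 + 2 * B) * h powr (2 * \<alpha>) * h powr (-b))"
        by (intro ennreal_leI mult_right_mono) auto
      finally show ?thesis
        using False by (simp add: max_def)
    qed
  qed
qed

lemma riesz_energy_kernel_majorant_le:
  assumes "0 < \<alpha>" "\<alpha> < 1" "0 \<le> b" "b < 1" "b < 2 * \<alpha>"
  obtains C where "0 \<le> C" and "\<And>h p q d. 0 < h \<Longrightarrow> 0 < d \<Longrightarrow> d \<le> \<bar>q - p\<bar> + h \<Longrightarrow>
      riesz_energy b (\<lambda>u. kernel_majorant \<alpha> h (p - u)) (\<lambda>v. kernel_majorant \<alpha> h (q - v))
        \<le> ennreal (C * h powr (2 * \<alpha>) * d powr (-b))"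
proof -
  obtain C where "0 \<le> C" and energy: "\<And>h p q. 0 < h \<Longrightarrow>
      riesz_energy b (\<lambda>u. kernel_majorant \<alpha> h (p - u)) (\<lambda>v. kernel_majorant \<alpha> h (q - v))
        \<le> ennreal (C * h powr (2 * \<alpha>) * max h (\<bar>q - p\<bar> / 4) powr (-b))"
    by (rule riesz_energy_kernel_majorant_le_max[OF assms]) auto
  show thesis
  proof (rule that[of "5 powr b * C"])
    show "0 \<le> 5 powr b * C"
      using \<open>0 \<le> C\<close> by simp
  next
    fix h p q d :: real
    assume h: "0 < h" and d: "0 < d" "d \<le> \<bar>q - p\<bar> + h"
    have "d / 5 \<le> max h (\<bar>q - p\<bar> / 4)"
      using d by (auto simp: max_def)
    then have "max h (\<bar>q - p\<bar> / 4) powr (-b) \<le> (d / 5) powr (-b)"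
      using d assms by (intro powr_mono2') auto
    also have "(d / 5) powr (-b) = 5 powr b * d powr (-b)"
      using d by (simp add: powr_divide powr_minus_divide)
    finally have "(C * h powr (2 * \<alpha>)) * max h (\<bar>q - p\<bar> / 4) powr (-b) \<le> (C * h powr (2 * \<alpha>)) * (5 powr b * d powr (-b))"
      using \<open>0 \<le> C\<close> by (intro mult_left_mono) auto
    then have "C * h powr (2 * \<alpha>) * max h (\<bar>q - p\<bar> / 4) powr (-b) \<le> 5 powr b * C * h powr (2 * \<alpha>) * d powr (-b)"
      by (simp add: mult_ac)
    with energy[OF h, of p q] show "riesz_energy b (\<lambda>u. kernel_majorant \<alpha> h (p - u)) (\<lambda>v. kernel_majorant \<alpha> h (q - v))
        \<le> ennreal (5 powr b * C * h powr (2 * \<alpha>) * d powr (-b))"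
      by (auto intro: order.trans ennreal_leI)
  qed
qed

section \<open>The estimate on the grid\<close>

lemma riesz_energy_Akern_le:
  assumes "0 < \<alpha>" "\<alpha> < 1" "0 \<le> b" "b < 1" "b < 2 * \<alpha>"
  obtains C where "\<And>h shat s \<tau>hat \<tau>. shat < s \<Longrightarrow> s \<le> shat + h \<Longrightarrow> s \<le> \<tau>hat \<Longrightarrow> \<tau>hat < \<tau> \<Longrightarrow> \<tau> \<le> \<tau>hat + h \<Longrightarrow>
      riesz_energy b (Akern \<alpha> shat s) (Akern \<alpha> \<tau>hat \<tau>) \<le> ennreal (C * h powr (2 * \<alpha>) * (\<tau> - s) powr (-b))"
proof -
  obtain C where "0 \<le> C" and key: "\<And>h p q d. 0 < h \<Longrightarrow> 0 < d \<Longrightarrow> d \<le> \<bar>q - p\<bar> + h \<Longrightarrow>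
      riesz_energy b (\<lambda>u. kernel_majorant \<alpha> h (p - u)) (\<lambda>v. kernel_majorant \<alpha> h (q - v))
        \<le> ennreal (C * h powr (2 * \<alpha>) * d powr (-b))"
    using riesz_energy_kernel_majorant_le[OF assms] by blast
  show thesis
  proof (rule that[of "4 * C"])
    fix h shat s \<tau>hat \<tau> :: real
    assume grid: "shat < s" "s \<le> shat + h" "s \<le> \<tau>hat" "\<tau>hat < \<tau>" "\<tau> \<le> \<tau>hat + h"
    define m where "m = (\<lambda>p u. kernel_majorant \<alpha> h (p - u))"
    define E where "E = C * h powr (2 * \<alpha>) * (\<tau> - s) powr (-b)"
    have h: "0 < h"
      using grid by linarith
    have [measurable]: "m p \<in> borel_measurable borel" for p
      unfolding m_def by measurable
    have m_nonneg: "0 \<le> m p u" for p u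
      using h by (simp add: m_def kernel_majorant_nonneg)
    have pair: "riesz_energy b (m p) (m q) \<le> ennreal E" if "p \<in> {shat, s}" "q \<in> {\<tau>hat, \<tau>}" for p q
      unfolding m_def E_def using that grid h by (intro key) auto
    have "riesz_energy b (Akern \<alpha> shat s) (Akern \<alpha> \<tau>hat \<tau>)
        \<le> riesz_energy b (\<lambda>u. m shat u + m s u) (\<lambda>v. m \<tau>hat v + m \<tau> v)"
      using grid assms unfolding m_def
      by (intro riesz_energy_mono Akern_nonneg Akern_le_kernel_majorant) auto
    also have "\<dots> = riesz_energy b (m shat) (m \<tau>hat) + riesz_energy b (m shat) (m \<tau>)
        + (riesz_energy b (m s) (m \<tau>hat) + riesz_energy b (m s) (m \<tau>))"
      using m_nonneg by (simp add: riesz_energy_add_left riesz_energy_add_right add_nonneg_nonneg)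
    also have "\<dots> \<le> ennreal E + ennreal E + (ennreal E + ennreal E)"
      by (intro add_mono pair) auto
    also have "\<dots> = ennreal (4 * C * h powr (2 * \<alpha>) * (\<tau> - s) powr (-b))"
      using \<open>0 \<le> C\<close> by (simp add: E_def algebra_simps flip: ennreal_plus)
    finally show "riesz_energy b (Akern \<alpha> shat s) (Akern \<alpha> \<tau>hat \<tau>)
        \<le> ennreal (4 * C * h powr (2 * \<alpha>) * (\<tau> - s) powr (-b))" .
  qed
qed

lemma grid_cells_ordered:
  fixes h s \<tau> :: real and i j :: nat
  assumes "1 \<le> i" "i < j" "0 < h" "s \<in> {real (i - 1) * h <.. real i * h}" "\<tau> \<in> {real (j - 1) * h <.. real j * h}"
  shows "real (i - 1) * h < s" "s \<le> real (i - 1) * h + h" "s \<le> real (j - 1) * h"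
    "real (j - 1) * h < \<tau>" "\<tau> \<le> real (j - 1) * h + h"
proof -
  have "real i * h = real (i - 1) * h + h" "real j * h = real (j - 1) * h + h"
    using assms by (simp_all add: of_nat_diff algebra_simps)
  moreover have "real i * h \<le> real (j - 1) * h"
    using assms by (intro mult_right_mono) auto
  moreover have "real (i - 1) * h < s" "s \<le> real i * h" "real (j - 1) * h < \<tau>" "\<tau> \<le> real j * h"
    using assms(4,5) by (simp_all only: greaterThanAtMost_iff)
  ultimately show "real (i - 1) * h < s" "s \<le> real (i - 1) * h + h" "s \<le> real (j - 1) * h"
    "real (j - 1) * h < \<tau>" "\<tau> \<le> real (j - 1) * h + h"
    by linarith+
qed

theorem lemma4p3:
  fixes H \<alpha> T :: real
  assumes "1/2 < H" "H < 1" "1 - H < \<alpha>" "\<alpha> < 1" "T > 0"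
  shows "\<exists>C::real. \<forall>N::nat. N \<ge> 2 \<longrightarrow>
           (\<forall>i j s \<tau>. 1 \<le> i \<and> i < j \<and> j \<le> N
              \<and> s \<in> {real (i - 1) * (T / N) <.. real i * (T / N)}
              \<and> \<tau> \<in> {real (j - 1) * (T / N) <.. real j * (T / N)}
            \<longrightarrow> (\<integral>\<^sup>+ (u, v). ennreal (indicator ({0..T} \<times> {0..T}) (u, v)
                    * Akern \<alpha> (real (i - 1) * (T / N)) s u
                    * Akern \<alpha> (real (j - 1) * (T / N)) \<tau> v
                    * \<bar>u - v\<bar> powr (2 * H - 2)) \<partial>(lborel \<Otimes>\<^sub>M lborel))
                \<le> ennreal (C * (T / N) powr (2 * \<alpha>) * (\<tau> - s) powr (2 * H - 2)))"
proof -
  have \<alpha>: "0 < \<alpha>" "\<alpha> < 1" and b: "0 \<le> 2 - 2 * H" "2 - 2 * H < 1" "2 - 2 * H < 2 * \<alpha>"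
    using assms by auto
  obtain C where energy: "\<And>h shat s \<tau>hat \<tau>. shat < s \<Longrightarrow> s \<le> shat + h \<Longrightarrow> s \<le> \<tau>hat \<Longrightarrow> \<tau>hat < \<tau> \<Longrightarrow> \<tau> \<le> \<tau>hat + h \<Longrightarrow>
      riesz_energy (2 - 2 * H) (Akern \<alpha> shat s) (Akern \<alpha> \<tau>hat \<tau>)
        \<le> ennreal (C * h powr (2 * \<alpha>) * (\<tau> - s) powr (-(2 - 2 * H)))"
    using riesz_energy_Akern_le[OF \<alpha> b] by blast
  show ?thesis
  proof (intro exI[of _ C] allI impI)
    fix N i j :: nat and s \<tau> :: real
    assume "2 \<le> N" and ij: "1 \<le> i \<and> i < j \<and> j \<le> N
      \<and> s \<in> {real (i - 1) * (T / N) <.. real i * (T / N)} \<and> \<tau> \<in> {real (j - 1) * (T / N) <.. real j * (T / N)}"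
    define h where "h = T / N"
    have "0 < h"
      using \<open>2 \<le> N\<close> assms by (simp add: h_def)
    with ij have grid: "real (i - 1) * h < s" "s \<le> real (i - 1) * h + h" "s \<le> real (j - 1) * h"
        "real (j - 1) * h < \<tau>" "\<tau> \<le> real (j - 1) * h + h"
      using grid_cells_ordered[of i j h s \<tau>] unfolding h_def by auto
    have "riesz_energy (2 - 2 * H) (\<lambda>u. indicator {0..T} u * Akern \<alpha> (real (i - 1) * h) s u)
                                   (\<lambda>v. indicator {0..T} v * Akern \<alpha> (real (j - 1) * h) \<tau> v)
        \<le> riesz_energy (2 - 2 * H) (Akern \<alpha> (real (i - 1) * h) s) (Akern \<alpha> (real (j - 1) * h) \<tau>)"
      using grid \<alpha> by (intro riesz_energy_mono) (auto simp: indicator_def Akern_nonneg)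
    also have "\<dots> \<le> ennreal (C * h powr (2 * \<alpha>) * (\<tau> - s) powr (-(2 - 2 * H)))"
      using energy[OF grid] .
    finally show "(\<integral>\<^sup>+ (u, v). ennreal (indicator ({0..T} \<times> {0..T}) (u, v)
            * Akern \<alpha> (real (i - 1) * (T / N)) s u * Akern \<alpha> (real (j - 1) * (T / N)) \<tau> v
            * \<bar>u - v\<bar> powr (2 * H - 2)) \<partial>(lborel \<Otimes>\<^sub>M lborel))
        \<le> ennreal (C * (T / N) powr (2 * \<alpha>) * (\<tau> - s) powr (2 * H - 2))"
      using nn_integral_square_eq_riesz_energy[of "{0..T}" "Akern \<alpha> (real (i - 1) * h) s"
          "Akern \<alpha> (real (j - 1) * h) \<tau>" "2 - 2 * H"]
      by (simp add: h_def)
  qed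
qed

end
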